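(* The relaxed composition $\uplus$ is not compositional with respect to stable models: there is no binary operation $\bowtie'$ mapping pairs of sets of interpretations to sets of interpretations such that $AS(\mathcal P_1\uplus\mathcal P_2)=AS(\mathcal P_1)\bowtie' AS(\mathcal P_2)$ for all program modules $\mathcal P_1,\mathcal P_2$ for which $\mathcal P_1\uplus\mathcal P_2$ is defined. (For instance, $\mathcal P_1=\langle\{a.\},\emptyset,\{a,b\},\emptyset\rangle$, $\mathcal Q_1=\langle\{a.\ \ \bot\leftarrow a,b.\},\emptyset,\{a,b\},\emptyset\rangle$, $\mathcal P_2=\mathcal Q_2=\langle\{b.\},\emptyset,\{b\},\emptyset\rangle$ satisfy $AS(\mathcal P_1)=AS(\mathcal Q_1)$, $AS(\mathcal P_2)=AS(\mathcal Q_2)$ but $AS(\mathcal P_1\uplus\mathcal P_2)\neq AS(\mathcal Q_1\uplus\mathcal Q_2)$.)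
   Context: A program module is a tuple $\mathcal P=\langle R,I,O,H\rangle$ where $R$ is a finite set of ground rules (normal rules $a\leftarrow b_1,\dots,b_m,not~c_1,\dots,not~c_n$, integrity constraints $\bot\leftarrow b_1,\dots,b_m,not~c_1,\dots,not~c_n$, and choice rules understood via their standard translation into normal rules), $I,O,H$ are pairwise disjoint finite sets of atoms (input, output, hidden atoms), every atom occurring in $R$ belongs to $At(\mathcal P)=I\cup O\cup H$, and no rule of $R$ has its head in $I$. For $M\subseteq At(\mathcal P)$, the reduct $R^M$ is obtained from $R$ by deleting every rule having some $not~c$ in its body with $c\in M$, and deleting all negative literals from the remaining rules. $M$ is a stable model of $\mathcal P$ iff $M$ satisfies all integrity constraints of $R$ and $M$ is the least model of the positive program $R^M\cup\{a.\mid a\in M\cap I\}$ (ignoring constraints). $AS(\mathcal P)$ denotes the set of stable models. Given $\mathcal P_1=\langle R_1,I_1,O_1,H_1\rangle$ and $\mathcal P_2=\langle R_2,I_2,O_2,H_2\rangle$, the relaxed composition $\mathcal P_1\uplus\mathcal P_2$ is defined iff $H_1\cap At(\mathcal P_2)=\emptyset$ and $H_2\cap At(\mathcal P_1)=\emptyset$, and then $\mathcal P_1\uplus\mathcal P_2=\langle R_1\cup R_2,(I_1\cup I_2)\setminus(O_1\cup O_2),O_1\cup O_2,H_1\cup H_2\rangle$. *)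

theory Defs
  imports Main
begin

text \<open>A normal rule a <- b1..bm, not c1..not cn is
  Normal a {b1..bm} {c1..cn}; an integrity constraint is Constraint {b..} {c..}.
  Choice rules are understood via their translation into normal rules, so they are
  not a separate constructor.\<close>

datatype 'a rule =
    Normal 'a "'a set" "'a set"
  | Constraint "'a set" "'a set"

fun pos_body :: "'a rule \<Rightarrow> 'a set" where
  "pos_body (Normal h p n) = p"
| "pos_body (Constraint p n) = p"

fun neg_body :: "'a rule \<Rightarrow> 'a set" where
  "neg_body (Normal h p n) = n"
| "neg_body (Constraint p n) = n"

fun rule_atoms :: "'a rule \<Rightarrow> 'a set" where
  "rule_atoms (Normal h p n) = insert h (p \<union> n)"
| "rule_atoms (Constraint p n) = p \<union> n"

fun heads :: "'a rule \<Rightarrow> 'a set" where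
  "heads (Normal h p n) = {h}"
| "heads (Constraint p n) = {}"

record 'a pmodule =
  Rules :: "'a rule set"
  Inp :: "'a set"
  Outp :: "'a set"
  Hid :: "'a set"

definition At :: "'a pmodule \<Rightarrow> 'a set" where
  "At P = Inp P \<union> Outp P \<union> Hid P"

definition wf_module :: "'a pmodule \<Rightarrow> bool" where
  "wf_module P \<longleftrightarrow>
     finite (Rules P) \<and> finite (Inp P) \<and> finite (Outp P) \<and> finite (Hid P)
   \<and> Inp P \<inter> Outp P = {} \<and> Inp P \<inter> Hid P = {} \<and> Outp P \<inter> Hid P = {}
   \<and> (\<forall>r\<in>Rules P. rule_atoms r \<subseteq> At P)
   \<and> (\<forall>r\<in>Rules P. finite (pos_body r) \<and> finite (neg_body r))
   \<and> (\<forall>r\<in>Rules P. heads r \<inter> Inp P = {})"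

text \<open>Reduct R^M: positive rules (head, positive body); constraints are dropped
  (they are checked separately).\<close>
definition reduct :: "'a rule set \<Rightarrow> 'a set \<Rightarrow> ('a \<times> 'a set) set" where
  "reduct R M = {(h, p) | h p n. Normal h p n \<in> R \<and> n \<inter> M = {}}"

definition least_model :: "('a \<times> 'a set) set \<Rightarrow> 'a set" where
  "least_model S = \<Inter> {X. \<forall>(h, p)\<in>S. p \<subseteq> X \<longrightarrow> h \<in> X}"

definition sat_constraints :: "'a rule set \<Rightarrow> 'a set \<Rightarrow> bool" where
  "sat_constraints R M \<longleftrightarrow>
     (\<forall>p n. Constraint p n \<in> R \<longrightarrow> \<not> (p \<subseteq> M \<and> n \<inter> M = {}))"

definition stable_model :: "'a pmodule \<Rightarrow> 'a set \<Rightarrow> bool" where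
  "stable_model P M \<longleftrightarrow> M \<subseteq> At P \<and> sat_constraints (Rules P) M
     \<and> M = least_model (reduct (Rules P) M \<union> {(a, {}) | a. a \<in> M \<inter> Inp P})"

definition AS :: "'a pmodule \<Rightarrow> 'a set set" where
  "AS P = {M. stable_model P M}"

definition relaxed_defined :: "'a pmodule \<Rightarrow> 'a pmodule \<Rightarrow> bool" where
  "relaxed_defined P1 P2 \<longleftrightarrow> Hid P1 \<inter> At P2 = {} \<and> Hid P2 \<inter> At P1 = {}"

definition relaxed_comp :: "'a pmodule \<Rightarrow> 'a pmodule \<Rightarrow> 'a pmodule" where
  "relaxed_comp P1 P2 =
     \<lparr> Rules = Rules P1 \<union> Rules P2,
       Inp = (Inp P1 \<union> Inp P2) - (Outp P1 \<union> Outp P2),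
       Outp = Outp P1 \<union> Outp P2,
       Hid = Hid P1 \<union> Hid P2 \<rparr>"

end

theory Submission
  imports Defs
begin

text \<open>An operation \<open>\<bowtie>'\<close> on sets of stable models would force \<open>AS (P\<^sub>1 \<uplus> P\<^sub>2) = AS (Q\<^sub>1 \<uplus> Q\<^sub>2)\<close> whenever \<open>AS P\<^sub>i = AS Q\<^sub>i\<close>.
  The modules \<open>{a.}\<close> and \<open>{a. \<bottom> \<leftarrow> a, b.}\<close> both have the single stable model \<open>{a}\<close>, because
  the constraint is never triggered without \<open>b\<close>; composing each with \<open>{b.}\<close> supplies \<open>b\<close>,
  giving \<open>{a, b}\<close> in the first case and no stable model in the second.\<close>

lemma not_compositional_if_AS_equivalent_differ:
  fixes P1 Q1 P2 Q2 :: "'a pmodule"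
  assumes "wf_module P1" "wf_module Q1" "wf_module P2" "wf_module Q2"
    and "relaxed_defined P1 P2" "relaxed_defined Q1 Q2"
    and "AS P1 = AS Q1" "AS P2 = AS Q2"
    and "AS (relaxed_comp P1 P2) \<noteq> AS (relaxed_comp Q1 Q2)"
  shows "\<not> (\<exists>join. \<forall>X Y :: 'a pmodule. wf_module X \<longrightarrow> wf_module Y \<longrightarrow> relaxed_defined X Y \<longrightarrow>
              AS (relaxed_comp X Y) = join (AS X) (AS Y))"
proof
  assume "\<exists>join. \<forall>X Y :: 'a pmodule. wf_module X \<longrightarrow> wf_module Y \<longrightarrow> relaxed_defined X Y \<longrightarrow>
              AS (relaxed_comp X Y) = join (AS X) (AS Y)"
  then obtain join where join: "\<forall>X Y :: 'a pmodule. wf_module X \<longrightarrow> wf_module Y \<longrightarrow>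
      relaxed_defined X Y \<longrightarrow> AS (relaxed_comp X Y) = join (AS X) (AS Y)" ..
  have "AS (relaxed_comp P1 P2) = AS (relaxed_comp Q1 Q2)"
    using join[rule_format, OF assms(1,3,5)] join[rule_format, OF assms(2,4,6)] assms(7,8)
    by simp
  with assms(9) show False ..
qed

definition fact :: "'a \<Rightarrow> 'a rule" where
  "fact a = Normal a {} {}"

lemma least_model_facts: "least_model {(a, {}) | a. a \<in> A} = A"
  unfolding least_model_def by blast

lemma reduct_facts_and_constraints:
  assumes "\<forall>r\<in>C. heads r = {}"
  shows "reduct (fact ` A \<union> C) M = {(a, {}) | a. a \<in> A}"
  using assms unfolding reduct_def fact_def by force

lemma AS_facts_and_constraints:
  assumes "Rules P = fact ` A \<union> C" and "\<forall>r\<in>C. heads r = {}" and "Inp P = {}"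
  shows "AS P = (if A \<subseteq> At P \<and> sat_constraints (Rules P) A then {A} else {})"
proof -
  have "stable_model P M \<longleftrightarrow> M = A \<and> A \<subseteq> At P \<and> sat_constraints (Rules P) A" for M
    using assms(2,3) unfolding stable_model_def assms(1)
    by (auto simp: reduct_facts_and_constraints least_model_facts)
  then show ?thesis
    by (auto simp: AS_def)
qed

definition facts_a :: "nat pmodule" where
  "facts_a = \<lparr>Rules = {fact 0}, Inp = {}, Outp = {0, 1}, Hid = {}\<rparr>"

definition facts_a_denial_ab :: "nat pmodule" where
  "facts_a_denial_ab = \<lparr>Rules = {fact 0, Constraint {0, 1} {}}, Inp = {}, Outp = {0, 1}, Hid = {}\<rparr>"

definition facts_b :: "nat pmodule" where
  "facts_b = \<lparr>Rules = {fact 1}, Inp = {}, Outp = {1}, Hid = {}\<rparr>"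

lemmas example_modules_defs = facts_a_def facts_a_denial_ab_def facts_b_def

lemma wf_example_modules:
  "wf_module facts_a" "wf_module facts_a_denial_ab" "wf_module facts_b"
  unfolding example_modules_defs wf_module_def At_def fact_def by auto

lemma relaxed_defined_example_modules:
  "relaxed_defined facts_a facts_b" "relaxed_defined facts_a_denial_ab facts_b"
  unfolding example_modules_defs relaxed_defined_def by auto

lemma AS_facts_a: "AS facts_a = {{0}}"
  by (subst AS_facts_and_constraints[where A = "{0}" and C = "{}"])
    (auto simp: facts_a_def fact_def At_def sat_constraints_def)

lemma AS_facts_a_denial_ab: "AS facts_a_denial_ab = {{0}}"
  by (subst AS_facts_and_constraints[where A = "{0}" and C = "{Constraint {0, 1} {}}"])
    (auto simp: facts_a_denial_ab_def fact_def At_def sat_constraints_def)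

lemma AS_relaxed_comp_facts_a_facts_b: "AS (relaxed_comp facts_a facts_b) = {{0, 1}}"
  by (subst AS_facts_and_constraints[where A = "{0, 1}" and C = "{}"])
    (auto simp: relaxed_comp_def example_modules_defs At_def sat_constraints_def fact_def)

lemma AS_relaxed_comp_facts_a_denial_ab_facts_b:
  "AS (relaxed_comp facts_a_denial_ab facts_b) = {}"
  by (subst AS_facts_and_constraints[where A = "{0, 1}" and C = "{Constraint {0, 1} {}}"])
    (auto simp: relaxed_comp_def example_modules_defs At_def sat_constraints_def)

theorem mainTheorem2:
  shows "\<not> (\<exists>join :: nat set set \<Rightarrow> nat set set \<Rightarrow> nat set set.
            \<forall>P1 P2 :: nat pmodule. wf_module P1 \<longrightarrow> wf_module P2 \<longrightarrow>
              relaxed_defined P1 P2 \<longrightarrow>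
              AS (relaxed_comp P1 P2) = join (AS P1) (AS P2))"
  by (rule not_compositional_if_AS_equivalent_differ
      [OF wf_example_modules(1,2,3,3) relaxed_defined_example_modules])
    (simp_all add: AS_facts_a AS_facts_a_denial_ab AS_relaxed_comp_facts_a_facts_b
      AS_relaxed_comp_facts_a_denial_ab_facts_b)

end
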